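(* Let $A\subseteq\mathcal{R}$ be outer measurable and let $(I_n)_{n\ge1}$ be pairwise disjoint intervals in $\mathcal{R}$ with $\lim_{n\to\infty}l(I_n)=0$. Then $A\setminus\bigcup_{n=1}^\infty I_n$ is outer measurable, the limit $\lim_{k\to\infty}M_u\big(A\setminus\bigcup_{n=1}^k I_n\big)$ exists in $\mathcal{R}$, and $$M_u\Big(A\setminus\bigcup_{n=1}^\infty I_n\Big)=\lim_{k\to\infty}M_u\Big(A\setminus\bigcup_{n=1}^k I_n\Big).$$
   Context: $\mathcal{R}$ denotes the Levi-Civita field: functions $x:\mathbb{Q}\to\mathbb{R}$ with left-finite support, with componentwise addition and formal power series multiplication, ordered by $x>0$ iff $x\ne0$ and $x[\min\operatorname{supp}x]>0$; it is a non-Archimedean ordered field extension of $\mathbb{R}$, Cauchy complete in the order topology, in which all limits and series are taken (a series $\sum a_n$ converges iff $a_n\to0$). An interval is a set $[a,b],[a,b),(a,b]$ or $(a,b)$ with $a<b$ in $\mathcal{R}$, of length $l=b-a$. A cover of $A\subseteq\mathcal{R}$ is a sequence of intervals $(S_n)_{n\ge1}$ with $A\subseteq\bigcup_n S_n$ and $\sum_n l(S_n)$ convergent in $\mathcal{R}$. $A$ is called outer measurable if the infimum $\inf\{\sum_n l(S_n): (S_n)\text{ a cover of }A\}$ exists in $\mathcal{R}$; this infimum is then called the outer measure $M_u(A)$. (For an outer measurable $A$ and finitely many intervals, $A\setminus\bigcup_{n=1}^k I_n$ is outer measurable.) *)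

theory Defs
  imports Main "HOL.Rat" "HOL.Real"
begin

section \<open>The Levi-Civita field\<close>

definition left_finite :: "(rat \<Rightarrow> real) \<Rightarrow> bool" where
  "left_finite x \<longleftrightarrow> (\<forall>q. finite {r. x r \<noteq> 0 \<and> r \<le> q})"

typedef lc = "{x :: rat \<Rightarrow> real. left_finite x}"
  morphisms Rep_lc Abs_lc
  by (rule exI[of _ "\<lambda>_. 0"]) (simp add: left_finite_def)

setup_lifting type_definition_lc

lemma left_finite_add:
  assumes "left_finite x" "left_finite y"
  shows "left_finite (\<lambda>q. x q + y q)"
  unfolding left_finite_def
proof
  fix q
  have "{r. x r + y r \<noteq> 0 \<and> r \<le> q} \<subseteq> {r. x r \<noteq> 0 \<and> r \<le> q} \<union> {r. y r \<noteq> 0 \<and> r \<le> q}"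
    by auto
  then show "finite {r. x r + y r \<noteq> 0 \<and> r \<le> q}"
    using assms unfolding left_finite_def by (meson finite_UnI finite_subset)
qed

lemma left_finite_uminus:
  assumes "left_finite x"
  shows "left_finite (\<lambda>q. - x q)"
  using assms unfolding left_finite_def by simp

instantiation lc :: ab_group_add
begin
lift_definition zero_lc :: lc is "\<lambda>_. 0" by (simp add: left_finite_def)
lift_definition plus_lc :: "lc \<Rightarrow> lc \<Rightarrow> lc" is "\<lambda>x y q. x q + y q"
  by (rule left_finite_add)
lift_definition uminus_lc :: "lc \<Rightarrow> lc" is "\<lambda>x q. - x q"
  by (rule left_finite_uminus)
lift_definition minus_lc :: "lc \<Rightarrow> lc \<Rightarrow> lc" is "\<lambda>x y q. x q - y q"
  using left_finite_add left_finite_uminus by fastforce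
instance
  by standard (transfer; auto simp: algebra_simps)+
end

text \<open>Formal power series (convolution) multiplication and unit; not needed for
  the statement below but recorded for completeness.  For left-finite x, y the
  index set of the sum is finite.\<close>
instantiation lc :: "{times, one}"
begin
definition one_lc :: lc where
  "one_lc = Abs_lc (\<lambda>q. if q = 0 then 1 else 0)"
definition times_lc :: "lc \<Rightarrow> lc \<Rightarrow> lc" where
  "times_lc x y = Abs_lc (\<lambda>q. \<Sum>p\<in>{(a, b). Rep_lc x a \<noteq> 0 \<and> Rep_lc y b \<noteq> 0 \<and> a + b = q}.
       Rep_lc x (fst p) * Rep_lc y (snd p))"
instance ..
end

definition lc_pos :: "lc \<Rightarrow> bool" where
  "lc_pos x \<longleftrightarrow> x \<noteq> 0 \<and> Rep_lc x (LEAST q. Rep_lc x q \<noteq> 0) > 0"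

instantiation lc :: ord
begin
definition less_lc :: "lc \<Rightarrow> lc \<Rightarrow> bool" where
  "less_lc x y \<longleftrightarrow> lc_pos (y - x)"
definition less_eq_lc :: "lc \<Rightarrow> lc \<Rightarrow> bool" where
  "less_eq_lc x y \<longleftrightarrow> x < y \<or> x = y"
instance ..
end

definition lc_lim :: "(nat \<Rightarrow> lc) \<Rightarrow> lc \<Rightarrow> bool" where
  "lc_lim X L \<longleftrightarrow> (\<forall>e::lc. 0 < e \<longrightarrow> (\<exists>N. \<forall>n\<ge>N. L - e < X n \<and> X n < L + e))"

definition lc_sums :: "(nat \<Rightarrow> lc) \<Rightarrow> lc \<Rightarrow> bool" where
  "lc_sums a s \<longleftrightarrow> lc_lim (\<lambda>k. \<Sum>n\<in>{1..k}. a n) s"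

definition lc_interval :: "lc set \<Rightarrow> bool" where
  "lc_interval S \<longleftrightarrow> (\<exists>a b. a < b \<and> S \<in> {{a..b}, {a..<b}, {a<..b}, {a<..<b}})"

definition lc_len :: "lc set \<Rightarrow> lc" where
  "lc_len S = (THE d. \<exists>a b. a < b \<and> S \<in> {{a..b}, {a..<b}, {a<..b}, {a<..<b}} \<and> d = b - a)"

definition lc_cover :: "lc set \<Rightarrow> (nat \<Rightarrow> lc set) \<Rightarrow> bool" where
  "lc_cover A S \<longleftrightarrow> (\<forall>n\<ge>1. lc_interval (S n)) \<and> A \<subseteq> (\<Union>n\<in>{1..}. S n)
     \<and> (\<exists>s. lc_sums (\<lambda>n. lc_len (S n)) s)"

definition cover_sums :: "lc set \<Rightarrow> lc set" where
  "cover_sums A = {s. \<exists>S. lc_cover A S \<and> lc_sums (\<lambda>n. lc_len (S n)) s}"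

definition lc_is_inf :: "lc set \<Rightarrow> lc \<Rightarrow> bool" where
  "lc_is_inf C m \<longleftrightarrow> (\<forall>s\<in>C. m \<le> s) \<and> (\<forall>m'. (\<forall>s\<in>C. m' \<le> s) \<longrightarrow> m' \<le> m)"

definition outer_measurable :: "lc set \<Rightarrow> bool" where
  "outer_measurable A \<longleftrightarrow> (\<exists>m. lc_is_inf (cover_sums A) m)"

definition M_u :: "lc set \<Rightarrow> lc" where
  "M_u A = (THE m. lc_is_inf (cover_sums A) m)"

end

(*
  Let B = A - \<Union>\<^sub>n I n and B\<^sub>k = A - \<Union>\<^sub>n\<^sub>\<le>\<^sub>k I n.  The lengths of the I n tend to 0, so in the
  non-Archimedean field they are summable and the tail sums T\<^sub>k tend to 0.  Each B\<^sub>k is outer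
  measurable: cutting a cover of X at the endpoints of an interval I splits it into a cover of
  X - I and a cover of X \<inter> I, which pins the cover sums of X - I down to within any e > 0.
  Since B \<subseteq> B\<^sub>k \<subseteq> B \<union> \<Union>\<^sub>n\<^sub>>\<^sub>k I n, a cover of B together with the tail intervals covers B\<^sub>k, so
  M\<^sub>u(B\<^sub>k) - T\<^sub>k bounds the cover sums of B from below, while those of B\<^sub>k are among them.
  Cauchy completeness then yields the infimum M\<^sub>u(B), squeezed as
  M\<^sub>u(B) \<le> M\<^sub>u(B\<^sub>k) \<le> M\<^sub>u(B) + T\<^sub>k.
*)

theory Submission
  imports Defs
begin

lemma lc_eq_iff: "x = y \<longleftrightarrow> (\<forall>q. Rep_lc x q = Rep_lc y q)"
  by (metis Rep_lc_inject ext)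

lemma left_finite_least_support:
  assumes "left_finite f" "f q0 \<noteq> 0"
  shows "\<exists>t. f t \<noteq> 0 \<and> (\<forall>r<t. f r = 0)"
proof -
  let ?S = "{r. f r \<noteq> 0 \<and> r \<le> q0}"
  have fin: "finite ?S" and "q0 \<in> ?S"
    using assms unfolding left_finite_def by auto
  then have t: "Min ?S \<in> ?S" by (intro Min_in) auto
  have "f r = 0" if "r < Min ?S" for r
  proof (rule ccontr)
    assume "f r \<noteq> 0"
    with t that have "r \<in> ?S" by auto
    with Min_le[OF fin] that show False by fastforce
  qed
  with t show ?thesis by blast
qed

lemma lc_leading_exists:
  assumes "Rep_lc x q0 \<noteq> 0"
  shows "\<exists>t. Rep_lc x t \<noteq> 0 \<and> (\<forall>r<t. Rep_lc x r = 0)"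
  using left_finite_least_support[of "Rep_lc x" q0] assms Rep_lc by auto

lemma lc_leading_unique:
  assumes "Rep_lc x p \<noteq> 0" "\<forall>r<p. Rep_lc x r = 0"
    and "Rep_lc x t \<noteq> 0" "\<forall>r<t. Rep_lc x r = 0"
  shows "p = t"
  using assms by (metis linorder_neqE)

lemma lc_pos_iff_leading: "lc_pos x \<longleftrightarrow> (\<exists>q. 0 < Rep_lc x q \<and> (\<forall>r<q. Rep_lc x r = 0))"
proof
  assume "lc_pos x"
  then have nz: "x \<noteq> 0" and pos: "Rep_lc x (LEAST q. Rep_lc x q \<noteq> 0) > 0"
    unfolding lc_pos_def by auto
  from nz obtain q0 where "Rep_lc x q0 \<noteq> 0"
    by (metis lc_eq_iff zero_lc.rep_eq)
  then obtain t where t: "Rep_lc x t \<noteq> 0" "\<forall>r<t. Rep_lc x r = 0"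
    using lc_leading_exists by blast
  have "(LEAST q. Rep_lc x q \<noteq> 0) = t"
    by (rule Least_equality) (use t in \<open>auto simp: not_less[symmetric]\<close>)
  with pos t show "\<exists>q. 0 < Rep_lc x q \<and> (\<forall>r<q. Rep_lc x r = 0)" by auto
next
  assume "\<exists>q. 0 < Rep_lc x q \<and> (\<forall>r<q. Rep_lc x r = 0)"
  then obtain t where t: "0 < Rep_lc x t" "\<forall>r<t. Rep_lc x r = 0" by blast
  have "(LEAST q. Rep_lc x q \<noteq> 0) = t"
    by (rule Least_equality) (use t in \<open>auto simp: not_less[symmetric]\<close>)
  moreover have "x \<noteq> 0" using t by (auto simp: zero_lc.rep_eq)
  ultimately show "lc_pos x" using t unfolding lc_pos_def by auto
qed

lemma lc_pos_add:
  assumes "lc_pos x" "lc_pos y"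
  shows "lc_pos (x + y)"
proof -
  obtain p t where p: "0 < Rep_lc x p" "\<forall>r<p. Rep_lc x r = 0"
    and t: "0 < Rep_lc y t" "\<forall>r<t. Rep_lc y r = 0"
    using assms unfolding lc_pos_iff_leading by blast
  have "0 < Rep_lc x (min p t) + Rep_lc y (min p t)"
    using p t by (cases p t rule: linorder_cases) (auto simp: min_def)
  then show ?thesis
    unfolding lc_pos_iff_leading plus_lc.rep_eq using p t by auto
qed

lemma lc_pos_uminus: "lc_pos x \<Longrightarrow> \<not> lc_pos (- x)"
proof
  assume "lc_pos x" "lc_pos (- x)"
  then obtain p t where p: "0 < Rep_lc x p" "\<forall>r<p. Rep_lc x r = 0"
    and t: "0 < - Rep_lc x t" "\<forall>r<t. - Rep_lc x r = 0"
    unfolding lc_pos_iff_leading uminus_lc.rep_eq by blast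
  have "p = t" by (rule lc_leading_unique[of x]) (use p t in auto)
  with p t show False by auto
qed

lemma lc_pos_or_uminus: "x \<noteq> 0 \<Longrightarrow> lc_pos x \<or> lc_pos (- x)"
proof -
  assume "x \<noteq> 0"
  then obtain q0 where "Rep_lc x q0 \<noteq> 0" by (metis lc_eq_iff zero_lc.rep_eq)
  then obtain t where t: "Rep_lc x t \<noteq> 0" "\<forall>r<t. Rep_lc x r = 0"
    using lc_leading_exists by blast
  then have "0 < Rep_lc x t \<or> 0 < Rep_lc (- x) t"
    by (auto simp: uminus_lc.rep_eq)
  then show ?thesis
    unfolding lc_pos_iff_leading using t by (auto simp: uminus_lc.rep_eq)
qed

instance lc :: linordered_ab_group_add
proof
  fix x y z :: lc
  show "(x < y) = (x \<le> y \<and> \<not> y \<le> x)"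
    unfolding less_eq_lc_def less_lc_def
    by (metis diff_self lc_pos_def minus_diff_eq lc_pos_uminus)
  show "x \<le> x" unfolding less_eq_lc_def by simp
  show "x \<le> y \<Longrightarrow> y \<le> z \<Longrightarrow> x \<le> z"
    unfolding less_eq_lc_def less_lc_def
    by (metis diff_add_cancel add_diff_eq lc_pos_add)
  show "x \<le> y \<Longrightarrow> y \<le> x \<Longrightarrow> x = y"
    unfolding less_eq_lc_def less_lc_def
    by (metis minus_diff_eq lc_pos_uminus)
  show "x \<le> y \<Longrightarrow> z + x \<le> z + y"
    unfolding less_eq_lc_def less_lc_def by simp
  show "x \<le> y \<or> y \<le> x"
    unfolding less_eq_lc_def less_lc_def
    by (metis eq_iff_diff_eq_0 minus_diff_eq lc_pos_or_uminus)
qed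

lemma lc_less_iff_leading:
  "x < y \<longleftrightarrow> (\<exists>q. 0 < Rep_lc (y - x) q \<and> (\<forall>r<q. Rep_lc (y - x) r = 0))"
  by (simp add: less_lc_def lc_pos_iff_leading)

lift_definition lc_half :: "lc \<Rightarrow> lc" is "\<lambda>x q. x q / 2"
  unfolding left_finite_def by simp

lemma lc_half_double: "lc_half x + lc_half x = x"
  by transfer auto

lemma lc_half_pos: "0 < x \<Longrightarrow> 0 < lc_half x"
  unfolding lc_less_iff_leading by (auto simp: minus_lc.rep_eq zero_lc.rep_eq lc_half.rep_eq)

lemma lc_half_add_less: "a < lc_half e \<Longrightarrow> b < lc_half e \<Longrightarrow> a + b < e"
  using add_strict_mono lc_half_double by metis

instance lc :: dense_linorder
proof
  fix x y :: lc
  assume "x < y"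
  then have "0 < lc_half (y - x)" by (simp add: lc_half_pos)
  moreover have "x + lc_half (y - x) + lc_half (y - x) = y"
    by (metis add.assoc add.commute diff_add_cancel lc_half_double)
  ultimately show "\<exists>z>x. z < y"
    by (metis less_add_same_cancel1)
qed

lift_definition lc_monom :: "rat \<Rightarrow> lc" is "\<lambda>q r. if r = q then 1 else 0"
  unfolding left_finite_def by (auto intro: finite_subset[of _ "{_}"])

lemma lc_monom_pos: "0 < lc_monom q"
  unfolding lc_less_iff_leading
  by (intro exI[of _ q]) (simp add: minus_lc.rep_eq zero_lc.rep_eq lc_monom.rep_eq)

lemma lc_monom_antimono: "p \<le> q \<Longrightarrow> lc_monom q \<le> lc_monom p"
  unfolding order.order_iff_strict lc_less_iff_leading
  by (cases "p = q") (auto intro!: exI[of _ p] simp: minus_lc.rep_eq lc_monom.rep_eq)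

definition vanishes_upto :: "rat \<Rightarrow> lc \<Rightarrow> bool" where
  "vanishes_upto q x \<longleftrightarrow> (\<forall>r\<le>q. Rep_lc x r = 0)"

lemma vanishes_upto_add: "vanishes_upto q x \<Longrightarrow> vanishes_upto q y \<Longrightarrow> vanishes_upto q (x + y)"
  by (simp add: vanishes_upto_def plus_lc.rep_eq)

lemma vanishes_upto_diff: "vanishes_upto q x \<Longrightarrow> vanishes_upto q y \<Longrightarrow> vanishes_upto q (x - y)"
  by (simp add: vanishes_upto_def minus_lc.rep_eq)

lemma vanishes_upto_zero: "vanishes_upto q 0"
  by (simp add: vanishes_upto_def zero_lc.rep_eq)

lemma vanishes_upto_monom: "q < p \<Longrightarrow> vanishes_upto q (lc_monom p)"
  by (auto simp: vanishes_upto_def lc_monom.rep_eq)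

lemma vanishes_upto_bounded:
  assumes "0 < e"
  obtains q where "\<And>x. vanishes_upto q x \<Longrightarrow> - e < x \<and> x < e"
proof -
  obtain p where p: "0 < Rep_lc e p" "\<forall>r<p. Rep_lc e r = 0"
    using assms unfolding lc_less_iff_leading by (auto simp: minus_lc.rep_eq zero_lc.rep_eq)
  have "- e < x \<and> x < e" if "vanishes_upto p x" for x
    using p that unfolding lc_less_iff_leading vanishes_upto_def
    by (auto intro!: exI[of _ p] simp: plus_lc.rep_eq minus_lc.rep_eq uminus_lc.rep_eq)
  then show ?thesis using that by blast
qed

lemma vanishes_upto_if_le_monom:
  assumes "x \<le> lc_monom p" "- x \<le> lc_monom p" "q < p"
  shows "vanishes_upto q x"
proof (rule ccontr)
  assume "\<not> vanishes_upto q x"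
  then obtain r where r: "r \<le> q" "Rep_lc x r \<noteq> 0" unfolding vanishes_upto_def by blast
  then obtain t where t: "Rep_lc x t \<noteq> 0" "\<forall>r<t. Rep_lc x r = 0"
    using lc_leading_exists by blast
  have "t < p" using t r assms(3) by (meson le_less_trans not_less)
  have "lc_monom p < x \<or> lc_monom p < - x"
    unfolding lc_less_iff_leading using t \<open>t < p\<close>
    by (cases "0 < Rep_lc x t")
      (auto intro!: exI[of _ t] simp: minus_lc.rep_eq uminus_lc.rep_eq lc_monom.rep_eq)
  with assms(1,2) show False by auto
qed

lemma vanishes_upto_le:
  assumes "vanishes_upto q y" "0 \<le> x" "x \<le> y"
  shows "vanishes_upto q x"
proof (rule ccontr)
  assume "\<not> vanishes_upto q x"
  then obtain r where r: "r \<le> q" "Rep_lc x r \<noteq> 0" unfolding vanishes_upto_def by blast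
  then obtain t where t: "Rep_lc x t \<noteq> 0" "\<forall>r<t. Rep_lc x r = 0"
    using lc_leading_exists by blast
  have "t \<le> q" using t r by (meson order_trans not_less)
  then have "y < x \<or> x < 0"
    unfolding lc_less_iff_leading using t assms(1)
    by (cases "0 < Rep_lc x t")
      (auto intro!: exI[of _ t] simp: minus_lc.rep_eq uminus_lc.rep_eq vanishes_upto_def)
  with assms(2,3) show False by auto
qed

lemma lc_lim_iff_vanishes: "lc_lim X L \<longleftrightarrow> (\<forall>q. \<exists>N. \<forall>n\<ge>N. vanishes_upto q (X n - L))"
proof
  assume lim: "lc_lim X L"
  show "\<forall>q. \<exists>N. \<forall>n\<ge>N. vanishes_upto q (X n - L)"
  proof
    fix q :: rat
    obtain N where N: "\<forall>n\<ge>N. L - lc_monom (q + 1) < X n \<and> X n < L + lc_monom (q + 1)"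
      using lim lc_monom_pos unfolding lc_lim_def by blast
    have "vanishes_upto q (X n - L)" if "n \<ge> N" for n
      by (rule vanishes_upto_if_le_monom[where p = "q + 1"]) (use N that in \<open>auto simp: algebra_simps\<close>)
    then show "\<exists>N. \<forall>n\<ge>N. vanishes_upto q (X n - L)" by blast
  qed
next
  assume van: "\<forall>q. \<exists>N. \<forall>n\<ge>N. vanishes_upto q (X n - L)"
  show "lc_lim X L"
    unfolding lc_lim_def
  proof (intro allI impI)
    fix e :: lc
    assume "0 < e"
    then obtain q where q: "\<And>x. vanishes_upto q x \<Longrightarrow> - e < x \<and> x < e"
      using vanishes_upto_bounded by blast
    obtain N where "\<forall>n\<ge>N. vanishes_upto q (X n - L)" using van by blast
    then show "\<exists>N. \<forall>n\<ge>N. L - e < X n \<and> X n < L + e"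
      using q by (intro exI[of _ N]) (force simp: algebra_simps)
  qed
qed

lemma lc_lim_const: "lc_lim (\<lambda>n. c) c"
  unfolding lc_lim_iff_vanishes by (simp add: vanishes_upto_zero)

lemma lc_lim_add:
  assumes "lc_lim X a" "lc_lim Y b"
  shows "lc_lim (\<lambda>n. X n + Y n) (a + b)"
  unfolding lc_lim_iff_vanishes
proof
  fix q
  obtain N N' where "\<forall>n\<ge>N. vanishes_upto q (X n - a)" "\<forall>n\<ge>N'. vanishes_upto q (Y n - b)"
    using assms unfolding lc_lim_iff_vanishes by blast
  then have "vanishes_upto q ((X n - a) + (Y n - b))" if "n \<ge> max N N'" for n
    using that by (simp add: vanishes_upto_add)
  then have "vanishes_upto q (X n + Y n - (a + b))" if "n \<ge> max N N'" for n
    using that by (simp add: algebra_simps)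
  then show "\<exists>N. \<forall>n\<ge>N. vanishes_upto q (X n + Y n - (a + b))" by blast
qed

lemma lc_lim_diff:
  assumes "lc_lim X a" "lc_lim Y b"
  shows "lc_lim (\<lambda>n. X n - Y n) (a - b)"
  unfolding lc_lim_iff_vanishes
proof
  fix q
  obtain N N' where "\<forall>n\<ge>N. vanishes_upto q (X n - a)" "\<forall>n\<ge>N'. vanishes_upto q (Y n - b)"
    using assms unfolding lc_lim_iff_vanishes by blast
  then have "vanishes_upto q ((X n - a) - (Y n - b))" if "n \<ge> max N N'" for n
    using that by (simp add: vanishes_upto_diff)
  then have "vanishes_upto q (X n - Y n - (a - b))" if "n \<ge> max N N'" for n
    using that by (simp add: algebra_simps)
  then show "\<exists>N. \<forall>n\<ge>N. vanishes_upto q (X n - Y n - (a - b))" by blast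
qed

lemma lc_lim_reindex:
  assumes "lc_lim X L" "\<And>N. \<exists>M. \<forall>n\<ge>M. N \<le> f n"
  shows "lc_lim (\<lambda>n. X (f n)) L"
  using assms unfolding lc_lim_iff_vanishes by (meson order_trans)

lemma lc_lim_le:
  assumes "lc_lim X L" "\<And>n. X n \<le> c"
  shows "L \<le> c"
proof (rule ccontr)
  assume "\<not> L \<le> c"
  then obtain N where "\<forall>n\<ge>N. L - (L - c) < X n"
    using assms(1) unfolding lc_lim_def by (meson diff_gt_0_iff_gt not_le)
  with assms(2)[of N] show False by auto
qed

lemma lc_lim_ge:
  assumes "lc_lim X L" "\<And>n. c \<le> X n"
  shows "c \<le> L"
proof (rule ccontr)
  assume "\<not> c \<le> L"
  then obtain N where "\<forall>n\<ge>N. X n < L + (c - L)"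
    using assms(1) unfolding lc_lim_def by (meson diff_gt_0_iff_gt not_le)
  with assms(2)[of N] show False by auto
qed

lemma lc_lim_squeeze:
  assumes "\<And>n. n \<ge> M \<Longrightarrow> L \<le> X n \<and> X n \<le> L + Y n" "lc_lim Y 0"
  shows "lc_lim X L"
  unfolding lc_lim_iff_vanishes
proof
  fix q
  obtain N where "\<forall>n\<ge>N. vanishes_upto q (Y n - 0)"
    using assms(2) unfolding lc_lim_iff_vanishes by blast
  moreover have "0 \<le> X n - L \<and> X n - L \<le> Y n" if "n \<ge> M" for n
    using assms(1)[OF that] by (simp add: add.commute diff_le_eq)
  ultimately have "vanishes_upto q (X n - L)" if "n \<ge> max M N" for n
    using that vanishes_upto_le by fastforce
  then show "\<exists>N. \<forall>n\<ge>N. vanishes_upto q (X n - L)" by blast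
qed

text \<open>The limit is assembled coefficientwise: each coefficient of a Cauchy sequence is
  eventually constant.\<close>

lemma lc_Cauchy_convergent:
  assumes "\<And>q. \<exists>N. \<forall>m\<ge>N. \<forall>n\<ge>N. vanishes_upto q (X m - X n)"
  shows "\<exists>L. lc_lim X L"
proof -
  obtain N where N: "\<And>q m n. m \<ge> N q \<Longrightarrow> n \<ge> N q \<Longrightarrow> vanishes_upto q (X m - X n)"
    using assms by metis
  have stable: "Rep_lc (X m) r = Rep_lc (X (N q)) r" if "r \<le> q" "m \<ge> N q" for r q m
    using N[of q m "N q"] that by (auto simp: vanishes_upto_def minus_lc.rep_eq)
  define g where "g r = Rep_lc (X (N r)) r" for r
  have g: "g r = Rep_lc (X (N q)) r" if "r \<le> q" for r q
    using stable[of r r "max (N r) (N q)"] stable[of r q "max (N r) (N q)"] that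
    by (simp add: g_def)
  have "left_finite g"
    unfolding left_finite_def
  proof
    fix q
    have "{r. g r \<noteq> 0 \<and> r \<le> q} = {r. Rep_lc (X (N q)) r \<noteq> 0 \<and> r \<le> q}"
      using g by auto
    then show "finite {r. g r \<noteq> 0 \<and> r \<le> q}"
      using Rep_lc[of "X (N q)"] unfolding left_finite_def by simp
  qed
  then have Rep_L: "Rep_lc (Abs_lc g) = g" by (simp add: Abs_lc_inverse)
  have "vanishes_upto q (X n - Abs_lc g)" if "n \<ge> N q" for q n
    using stable[of _ q n] g[of _ q] that
    by (simp add: vanishes_upto_def minus_lc.rep_eq Rep_L)
  then have "lc_lim X (Abs_lc g)" unfolding lc_lim_iff_vanishes by blast
  then show ?thesis by blast
qed

definition psum :: "(nat \<Rightarrow> lc) \<Rightarrow> nat \<Rightarrow> lc" where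
  "psum a k = (\<Sum>n\<in>{1..k}. a n)"

lemma lc_sums_iff_psum: "lc_sums a s \<longleftrightarrow> lc_lim (psum a) s"
  unfolding lc_sums_def psum_def by simp

lemma psum_0 [simp]: "psum a 0 = 0"
  by (simp add: psum_def)

lemma psum_Suc [simp]: "psum a (Suc k) = psum a k + a (Suc k)"
  by (simp add: psum_def)

lemma Rep_lc_sum: "Rep_lc (sum f A) r = (\<Sum>i\<in>A. Rep_lc (f i) r)"
  by (induction A rule: infinite_finite_induct) (simp_all add: zero_lc.rep_eq plus_lc.rep_eq)

lemma lc_summable_iff_lim_zero: "(\<exists>s. lc_sums a s) \<longleftrightarrow> lc_lim a 0"
proof
  assume "\<exists>s. lc_sums a s"
  then obtain s where lim: "lc_lim (psum a) s" by (auto simp: lc_sums_iff_psum)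
  have "lc_lim (\<lambda>k. psum a (Suc k)) s"
    by (rule lc_lim_reindex[OF lim]) (use le_SucI in blast)
  then have "lc_lim (\<lambda>k. psum a (Suc k) - psum a k) (s - s)"
    using lim by (rule lc_lim_diff)
  then have "\<exists>N. \<forall>n\<ge>N. vanishes_upto q (a (Suc n))" for q
    unfolding lc_lim_iff_vanishes by simp
  then have "\<exists>N. \<forall>n\<ge>N. vanishes_upto q (a n)" for q
    by (metis Suc_le_D Suc_le_mono)
  then show "lc_lim a 0" unfolding lc_lim_iff_vanishes by simp
next
  assume "lc_lim a 0"
  show "\<exists>s. lc_sums a s"
    unfolding lc_sums_iff_psum
  proof (rule lc_Cauchy_convergent)
    fix q
    obtain N where N: "\<forall>n\<ge>N. vanishes_upto q (a n)"
      using \<open>lc_lim a 0\<close> unfolding lc_lim_iff_vanishes by auto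
    have stable: "Rep_lc (psum a m) r = Rep_lc (psum a N) r" if "m \<ge> N" "r \<le> q" for m r
      unfolding psum_def Rep_lc_sum
      by (rule sum.mono_neutral_right) (use N that in \<open>auto simp: vanishes_upto_def\<close>)
    have "vanishes_upto q (psum a m - psum a n)" if "m \<ge> N" "n \<ge> N" for m n
      using stable[OF that(1)] stable[OF that(2)] by (simp add: vanishes_upto_def minus_lc.rep_eq)
    then show "\<exists>N. \<forall>m\<ge>N. \<forall>n\<ge>N. vanishes_upto q (psum a m - psum a n)" by blast
  qed
qed

lemma lc_sums_add:
  assumes "lc_sums a s" "lc_sums b t"
  shows "lc_sums (\<lambda>n. a n + b n) (s + t)"
  using assms unfolding lc_sums_def sum.distrib by (rule lc_lim_add)

lemma lc_sums_diff:
  assumes "lc_sums a s" "lc_sums b t"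
  shows "lc_sums (\<lambda>n. a n - b n) (s - t)"
  using assms unfolding lc_sums_def sum_subtractf by (rule lc_lim_diff)

lemma lc_sums_cong:
  assumes "lc_sums a s" "\<And>n. n \<ge> 1 \<Longrightarrow> a n = b n"
  shows "lc_sums b s"
proof -
  have "psum a = psum b"
    unfolding psum_def using assms(2) by (intro ext sum.cong) auto
  then show ?thesis using assms(1) by (simp add: lc_sums_iff_psum)
qed

lemma lc_sums_comparison:
  assumes "\<And>n. n \<ge> 1 \<Longrightarrow> 0 \<le> a n \<and> a n \<le> b n" "lc_sums b t"
  shows "\<exists>s. lc_sums a s"
proof -
  have b0: "lc_lim b 0" using assms(2) lc_summable_iff_lim_zero by blast
  have "lc_lim a 0"
    by (rule lc_lim_squeeze[where M = 1, OF _ b0]) (simp add: assms(1))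
  then show ?thesis by (simp add: lc_summable_iff_lim_zero)
qed

lemma psum_shift: "psum (\<lambda>n. a (n + k)) m = psum a (m + k) - psum a k"
  by (induction m) (simp_all add: algebra_simps)

lemma lc_sums_shift:
  assumes "lc_sums a s"
  shows "lc_sums (\<lambda>n. a (n + k)) (s - psum a k)"
proof -
  have "lc_lim (\<lambda>m. psum a (m + k)) s"
    using assms unfolding lc_sums_iff_psum
    by (rule lc_lim_reindex) (use trans_le_add1 in blast)
  then show ?thesis
    unfolding lc_sums_iff_psum psum_shift using lc_lim_const by (rule lc_lim_diff)
qed

definition interleave :: "(nat \<Rightarrow> 'a) \<Rightarrow> (nat \<Rightarrow> 'a) \<Rightarrow> nat \<Rightarrow> 'a" where
  "interleave a b n = (if even n then b (n div 2) else a ((n + 1) div 2))"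

lemma psum_interleave: "psum (interleave a b) n = psum a ((n + 1) div 2) + psum b (n div 2)"
proof (induction n)
  case (Suc n)
  show ?case
  proof (cases "even n")
    case True
    then obtain j where "n = 2 * j" by blast
    then show ?thesis using Suc by (simp add: interleave_def algebra_simps)
  next
    case False
    then obtain j where "n = 2 * j + 1" using oddE by blast
    then show ?thesis using Suc by (simp add: interleave_def algebra_simps)
  qed
qed simp

lemma lc_sums_interleave:
  assumes "lc_sums a s" "lc_sums b t"
  shows "lc_sums (interleave a b) (s + t)"
proof -
  have "\<exists>M. \<forall>n\<ge>M. N \<le> (n + 1) div 2" "\<exists>M. \<forall>n\<ge>M. N \<le> n div 2" for N :: nat
    by (auto intro!: exI[of _ "2 * N"])
  then have "lc_lim (\<lambda>n. psum a ((n + 1) div 2)) s" "lc_lim (\<lambda>n. psum b (n div 2)) t"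
    using assms unfolding lc_sums_iff_psum by (auto intro: lc_lim_reindex)
  then show ?thesis
    unfolding lc_sums_iff_psum psum_interleave by (rule lc_lim_add)
qed

lemma lc_interval_lower_bound_iff:
  fixes a b :: lc
  assumes "a < b" "S \<in> {{a..b}, {a..<b}, {a<..b}, {a<..<b}}"
  shows "(\<forall>y\<in>S. x \<le> y) \<longleftrightarrow> x \<le> a"
proof
  assume lower: "\<forall>y\<in>S. x \<le> y"
  show "x \<le> a"
  proof (rule ccontr)
    assume "\<not> x \<le> a"
    then obtain z where "a < z" "z < min x b" using assms(1) dense by (metis min_less_iff_conj not_le)
    moreover from this have "z \<in> S" using assms(2) by auto
    ultimately show False using lower by (metis min_less_iff_conj not_le)
  qed
qed (use assms(2) in auto)

lemma lc_interval_upper_bound_iff: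
  fixes a b :: lc
  assumes "a < b" "S \<in> {{a..b}, {a..<b}, {a<..b}, {a<..<b}}"
  shows "(\<forall>y\<in>S. y \<le> x) \<longleftrightarrow> b \<le> x"
proof
  assume upper: "\<forall>y\<in>S. y \<le> x"
  show "b \<le> x"
  proof (rule ccontr)
    assume "\<not> b \<le> x"
    then obtain z where "max x a < z" "z < b" using assms(1) dense by (metis max_less_iff_conj not_le)
    moreover from this have "z \<in> S" using assms(2) by auto
    ultimately show False using upper by (metis max_less_iff_conj not_le)
  qed
qed (use assms(2) in auto)

lemma lc_len_eq:
  fixes a b :: lc
  assumes "a < b" "S \<in> {{a..b}, {a..<b}, {a<..b}, {a<..<b}}"
  shows "lc_len S = b - a"
  unfolding lc_len_def
proof (rule the_equality)
  fix d
  assume "\<exists>a' b'. a' < b' \<and> S \<in> {{a'..b'}, {a'..<b'}, {a'<..b'}, {a'<..<b'}} \<and> d = b' - a'"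
  then obtain a' b' where a'b': "a' < b'" "S \<in> {{a'..b'}, {a'..<b'}, {a'<..b'}, {a'<..<b'}}"
    and "d = b' - a'"
    by blast
  moreover have "a = a'"
    using lc_interval_lower_bound_iff[OF assms] lc_interval_lower_bound_iff[OF a'b']
    by (meson order_antisym order_refl)
  moreover have "b = b'"
    using lc_interval_upper_bound_iff[OF assms] lc_interval_upper_bound_iff[OF a'b']
    by (meson order_antisym order_refl)
  ultimately show "d = b - a" by simp
qed (use assms in blast)

lemma lc_interval_bounds:
  assumes "lc_interval S"
  obtains a b where "a < b" "lc_len S = b - a" "{a<..<b} \<subseteq> S" "S \<subseteq> {a..b}"
proof -
  obtain a b where ab: "a < b" "S \<in> {{a..b}, {a..<b}, {a<..b}, {a<..<b}}"
    using assms unfolding lc_interval_def by blast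
  show ?thesis by (rule that[of a b]) (use ab lc_len_eq[OF ab] in auto)
qed

lemma lc_interval_family_bounds:
  assumes "\<And>n. n \<ge> 1 \<Longrightarrow> lc_interval (S n)"
  obtains lo hi where
    "\<And>n. n \<ge> 1 \<Longrightarrow> lo n \<le> hi n \<and> lc_len (S n) = hi n - lo n \<and> S n \<subseteq> {lo n..hi n}"
proof -
  have "\<exists>p. n \<ge> 1 \<longrightarrow> fst p \<le> snd p \<and> lc_len (S n) = snd p - fst p \<and> S n \<subseteq> {fst p..snd p}"
    for n
  proof (cases "n \<ge> 1")
    case True
    then obtain a b where "a < b" "lc_len (S n) = b - a" "S n \<subseteq> {a..b}"
      using lc_interval_bounds assms by metis
    then show ?thesis by (intro exI[of _ "(a, b)"]) auto
  qed simp
  then obtain P where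
    "\<And>n. n \<ge> 1 \<Longrightarrow> fst (P n) \<le> snd (P n) \<and> lc_len (S n) = snd (P n) - fst (P n)
       \<and> S n \<subseteq> {fst (P n)..snd (P n)}"
    by metis
  then show ?thesis using that[of "\<lambda>n. fst (P n)" "\<lambda>n. snd (P n)"] by blast
qed

text \<open>Covers by closed, possibly degenerate intervals \<open>[lo n, hi n]\<close>; they are not covers in
  the sense of \<open>lc_cover\<close>, but each one is approximated by such covers.\<close>

definition closed_cover :: "lc set \<Rightarrow> (nat \<Rightarrow> lc) \<Rightarrow> (nat \<Rightarrow> lc) \<Rightarrow> lc \<Rightarrow> bool" where
  "closed_cover X lo hi s \<longleftrightarrow> (\<forall>n\<ge>1. lo n \<le> hi n) \<and> X \<subseteq> (\<Union>n\<in>{1..}. {lo n..hi n})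
     \<and> lc_sums (\<lambda>n. hi n - lo n) s"

lemma closed_cover_subset: "closed_cover X lo hi s \<Longrightarrow> Y \<subseteq> X \<Longrightarrow> closed_cover Y lo hi s"
  unfolding closed_cover_def by blast

lemma cover_sums_antimono: "Y \<subseteq> X \<Longrightarrow> cover_sums X \<subseteq> cover_sums Y"
  unfolding cover_sums_def lc_cover_def by blast

lemma closed_cover_if_cover_sums:
  assumes "s \<in> cover_sums X"
  obtains lo hi where "closed_cover X lo hi s"
proof -
  obtain S where S: "lc_cover X S" "lc_sums (\<lambda>n. lc_len (S n)) s"
    using assms unfolding cover_sums_def by blast
  obtain lo hi where lh:
    "\<And>n. n \<ge> 1 \<Longrightarrow> lo n \<le> hi n \<and> lc_len (S n) = hi n - lo n \<and> S n \<subseteq> {lo n..hi n}"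
    using lc_interval_family_bounds S(1) unfolding lc_cover_def by blast
  have "X \<subseteq> (\<Union>n\<in>{1..}. {lo n..hi n})"
    using S(1) lh unfolding lc_cover_def by fastforce
  moreover have "lc_sums (\<lambda>n. hi n - lo n) s"
    using S(2) by (rule lc_sums_cong) (simp add: lh)
  ultimately show ?thesis using lh that unfolding closed_cover_def by blast
qed

lemma closed_cover_Un:
  assumes "closed_cover X la ha s" "closed_cover Y lb hb t"
  shows "closed_cover (X \<union> Y) (interleave la lb) (interleave ha hb) (s + t)"
  unfolding closed_cover_def
proof (intro conjI)
  show "\<forall>n\<ge>1. interleave la lb n \<le> interleave ha hb n"
    using assms unfolding closed_cover_def interleave_def by (auto elim!: evenE oddE)
  show "X \<union> Y \<subseteq> (\<Union>n\<in>{1..}. {interleave la lb n..interleave ha hb n})"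
  proof
    fix x
    assume "x \<in> X \<union> Y"
    then consider n where "n \<ge> 1" "x \<in> {la n..ha n}" | n where "n \<ge> 1" "x \<in> {lb n..hb n}"
      using assms unfolding closed_cover_def by blast
    then show "x \<in> (\<Union>n\<in>{1..}. {interleave la lb n..interleave ha hb n})"
    proof cases
      case (1 n)
      then show ?thesis by (intro UN_I[of "2 * n - 1"]) (auto simp: interleave_def)
    next
      case (2 n)
      then show ?thesis by (intro UN_I[of "2 * n"]) (auto simp: interleave_def)
    qed
  qed
  have "(\<lambda>n. interleave ha hb n - interleave la lb n)
      = interleave (\<lambda>n. ha n - la n) (\<lambda>n. hb n - lb n)"
    by (auto simp: interleave_def)
  then show "lc_sums (\<lambda>n. interleave ha hb n - interleave la lb n) (s + t)"
    using assms lc_sums_interleave unfolding closed_cover_def by simp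
qed

lemma closed_cover_tail:
  assumes "\<And>n. n \<ge> 1 \<Longrightarrow> lo n \<le> hi n \<and> S n \<subseteq> {lo n..hi n}" "lc_sums (\<lambda>n. hi n - lo n) s"
  shows "closed_cover (\<Union>n\<in>{Suc k..}. S n) (\<lambda>n. lo (n + k)) (\<lambda>n. hi (n + k))
    (s - psum (\<lambda>n. hi n - lo n) k)"
  unfolding closed_cover_def
proof (intro conjI)
  show "(\<Union>n\<in>{Suc k..}. S n) \<subseteq> (\<Union>n\<in>{1..}. {lo (n + k)..hi (n + k)})"
  proof
    fix x
    assume "x \<in> (\<Union>n\<in>{Suc k..}. S n)"
    then obtain n where "n \<ge> Suc k" "x \<in> S n" by blast
    with assms(1)[of n] show "x \<in> (\<Union>n\<in>{1..}. {lo (n + k)..hi (n + k)})"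
      by (intro UN_I[of "n - k"]) auto
  qed
qed (use assms lc_sums_shift[OF assms(2)] in auto)

lemma lc_sums_tail_lim: "lc_sums a s \<Longrightarrow> lc_lim (\<lambda>k. s - psum a k) 0"
  using lc_lim_diff[OF lc_lim_const, of "psum a" s s] by (simp add: lc_sums_iff_psum)

lemma lc_positive_series_below:
  assumes "0 < e"
  obtains \<delta> \<Delta> where "\<And>n. 0 < \<delta> n" "lc_sums \<delta> \<Delta>" "\<Delta> \<le> e"
proof -
  obtain p where p: "0 < Rep_lc e p" "\<forall>r<p. Rep_lc e r = 0"
    using assms unfolding lc_less_iff_leading by (auto simp: minus_lc.rep_eq zero_lc.rep_eq)
  define \<delta> where "\<delta> n = lc_monom (p + of_nat n)" for n
  have "\<exists>N. \<forall>n\<ge>N. vanishes_upto q (\<delta> n - 0)" for q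
  proof -
    obtain N :: nat where "q - p < of_nat N" using reals_Archimedean2 by blast
    then have "q < p + of_nat n" if "n \<ge> N" for n
      using that of_nat_mono[OF that, where 'a = rat] by linarith
    then show ?thesis unfolding \<delta>_def by (auto intro: vanishes_upto_monom)
  qed
  then obtain \<Delta> where \<Delta>: "lc_sums \<delta> \<Delta>"
    using lc_summable_iff_lim_zero lc_lim_iff_vanishes by blast
  have "Rep_lc (psum \<delta> k) r = 0" if "r \<le> p" for k r
    using that unfolding psum_def Rep_lc_sum \<delta>_def lc_monom.rep_eq
    by (intro sum.neutral) auto
  then have "psum \<delta> k < e" for k
    unfolding lc_less_iff_leading using p by (auto intro!: exI[of _ p] simp: minus_lc.rep_eq)
  then have "\<Delta> \<le> e"
    using \<Delta> unfolding lc_sums_iff_psum by (auto intro: lc_lim_le less_imp_le)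
  moreover have "0 < \<delta> n" for n unfolding \<delta>_def by (rule lc_monom_pos)
  ultimately show ?thesis using \<Delta> that by blast
qed

lemma closed_cover_approx:
  assumes "closed_cover X lo hi s" "0 < e"
  obtains s' where "s' \<in> cover_sums X" "s' \<le> s + e"
proof -
  obtain \<delta> \<Delta> where \<delta>: "\<And>n. 0 < \<delta> n" "lc_sums \<delta> \<Delta>" "\<Delta> \<le> e"
    using lc_positive_series_below[OF assms(2)] by blast
  define S where "S n = {lo n..hi n + \<delta> n}" for n
  have lt: "lo n < hi n + \<delta> n" if "n \<ge> 1" for n
    using assms(1) \<delta>(1)[of n] that unfolding closed_cover_def
    by (metis add.right_neutral add_le_less_mono)
  have sums: "lc_sums (\<lambda>n. lc_len (S n)) (s + \<Delta>)"
  proof (rule lc_sums_cong)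
    show "lc_sums (\<lambda>n. (hi n - lo n) + \<delta> n) (s + \<Delta>)"
      using assms(1) \<delta>(2) unfolding closed_cover_def by (intro lc_sums_add) auto
    show "hi n - lo n + \<delta> n = lc_len (S n)" if "n \<ge> 1" for n
      using lc_len_eq[of "lo n" "hi n + \<delta> n" "S n"] lt[OF that] by (simp add: S_def algebra_simps)
  qed
  moreover have "lc_cover X S"
    unfolding lc_cover_def
  proof (intro conjI)
    show "\<forall>n\<ge>1. lc_interval (S n)"
      using lt unfolding lc_interval_def S_def by blast
    show "X \<subseteq> (\<Union>n\<in>{1..}. S n)"
      using assms(1) \<delta>(1) unfolding closed_cover_def S_def
      by (force intro: order_trans[OF _ less_imp_le] simp: add_increasing2 less_imp_le)
  qed (use sums in blast)
  ultimately have "s + \<Delta> \<in> cover_sums X"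
    unfolding cover_sums_def lc_cover_def by blast
  moreover have "s + \<Delta> \<le> s + e" using \<delta>(3) by simp
  ultimately show ?thesis using that by blast
qed

lemma lc_is_inf_unique: "lc_is_inf C m \<Longrightarrow> lc_is_inf C m' \<Longrightarrow> m = m'"
  unfolding lc_is_inf_def by (meson order_antisym)

lemma M_u_eq: "lc_is_inf (cover_sums X) m \<Longrightarrow> M_u X = m"
  unfolding M_u_def using lc_is_inf_unique by blast

lemma outer_measurable_M_u: "outer_measurable X \<Longrightarrow> lc_is_inf (cover_sums X) (M_u X)"
  unfolding outer_measurable_def using M_u_eq by blast

lemma lc_is_inf_approx:
  assumes "lc_is_inf C m" "0 < e"
  obtains s where "s \<in> C" "s < m + e"
proof -
  have "\<not> (\<forall>s\<in>C. m + e \<le> s)"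
    using assms unfolding lc_is_inf_def by (meson add_le_same_cancel1 not_le)
  then show ?thesis using that by (auto simp: not_le)
qed

lemma lc_is_inf_le_closed_cover:
  assumes "lc_is_inf (cover_sums X) m" "closed_cover X lo hi s"
  shows "m \<le> s"
proof (rule ccontr)
  assume "\<not> m \<le> s"
  then obtain z where z: "s < z" "z < m" using dense by (metis not_le)
  then obtain s' where "s' \<in> cover_sums X" "s' \<le> s + (z - s)"
    using closed_cover_approx[OF assms(2), of "z - s"] by auto
  with assms(1) z show False unfolding lc_is_inf_def by fastforce
qed

lemma lc_is_inf_le_add_closed_cover:
  assumes "lc_is_inf (cover_sums X) m" "X \<subseteq> Y \<union> Z" "s \<in> cover_sums Y" "closed_cover Z lo hi t"
  shows "m \<le> s + t"
proof -
  obtain lo' hi' where "closed_cover Y lo' hi' s"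
    using assms(3) closed_cover_if_cover_sums by blast
  from closed_cover_Un[OF this assms(4)] assms(2)
  have "closed_cover X (interleave lo' lo) (interleave hi' hi) (s + t)"
    by (rule closed_cover_subset)
  with assms(1) show ?thesis by (rule lc_is_inf_le_closed_cover)
qed

lemma lc_lim_monom: "lc_lim (\<lambda>j. lc_monom (of_nat j)) 0"
  unfolding lc_lim_iff_vanishes
proof
  fix q :: rat
  obtain N :: nat where N: "q < of_nat N" using reals_Archimedean2 by blast
  have "q < of_nat n" if "n \<ge> N" for n
    using N of_nat_mono[OF that, where 'a = rat] by linarith
  then show "\<exists>N. \<forall>n\<ge>N. vanishes_upto q (lc_monom (of_nat n) - 0)"
    by (auto intro: vanishes_upto_monom)
qed

text \<open>Cauchy completeness stands in for the missing least upper bound property: upper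
  approximants whose gap to a lower bound shrinks like \<open>lc_monom j\<close> form a Cauchy sequence.\<close>

lemma lc_is_inf_exists:
  assumes "\<And>e. 0 < e \<Longrightarrow> \<exists>l s. (\<forall>y\<in>C. l \<le> y) \<and> s \<in> C \<and> s - l \<le> e"
  shows "\<exists>m. lc_is_inf C m"
proof -
  have "\<forall>j::nat. \<exists>l s. (\<forall>y\<in>C. l \<le> y) \<and> s \<in> C \<and> s - l \<le> lc_monom (of_nat j)"
    using assms lc_monom_pos by blast
  then obtain l where "\<forall>j. \<exists>s. (\<forall>y\<in>C. l j \<le> y) \<and> s \<in> C \<and> s - l j \<le> lc_monom (of_nat j)"
    unfolding choice_iff by blast
  then obtain s where "\<forall>j. (\<forall>y\<in>C. l j \<le> y) \<and> s j \<in> C \<and> s j - l j \<le> lc_monom (of_nat j)"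
    unfolding choice_iff by blast
  then have lower: "\<And>j y. y \<in> C \<Longrightarrow> l j \<le> y" and s: "\<And>j. s j \<in> C"
    and gap: "\<And>j. s j - l j \<le> lc_monom (of_nat j)"
    by auto
  have "vanishes_upto q (s m - s n)" if "q < of_nat N" "m \<ge> N" "n \<ge> N" for q N m n
  proof (rule vanishes_upto_if_le_monom)
    have bound: "s i - s k \<le> lc_monom (of_nat N)" if "i \<ge> N" for i k
    proof -
      have "s i - s k \<le> s i - l i" using lower[OF s[of k]] by simp
      also have "\<dots> \<le> lc_monom (of_nat i)" by (rule gap)
      also have "\<dots> \<le> lc_monom (of_nat N)" using that by (simp add: lc_monom_antimono)
      finally show ?thesis .
    qed
    show "s m - s n \<le> lc_monom (of_nat N)" "- (s m - s n) \<le> lc_monom (of_nat N)"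
      using bound[OF \<open>m \<ge> N\<close>, of n] bound[OF \<open>n \<ge> N\<close>, of m] by simp_all
  qed (use that in simp)
  then obtain L where L: "lc_lim s L"
    by (metis lc_Cauchy_convergent reals_Archimedean2)
  have "lc_lim (\<lambda>j. s j - l j) 0"
    by (rule lc_lim_squeeze[where M = 0, OF _ lc_lim_monom]) (use gap lower s in auto)
  with L have "lc_lim (\<lambda>j. s j - (s j - l j)) (L - 0)" by (rule lc_lim_diff)
  then have "lc_lim l L" by simp
  then have "L \<le> y" if "y \<in> C" for y using lower[OF that] by (rule lc_lim_le)
  moreover have "m \<le> L" if "\<forall>y\<in>C. m \<le> y" for m
    using L that s by (auto intro: lc_lim_ge)
  ultimately show ?thesis unfolding lc_is_inf_def by blast
qed

lemma closed_cover_cut: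
  assumes "closed_cover X lo hi s"
  obtains u s1 s2 where "closed_cover {x\<in>X. x \<le> c} lo u s1" "closed_cover {x\<in>X. c \<le> x} u hi s2"
    "s1 + s2 = s"
proof -
  define u where "u n = max (lo n) (min (hi n) c)" for n
  have lo_hi: "lo n \<le> hi n" if "n \<ge> 1" for n
    using assms that unfolding closed_cover_def by blast
  then have between: "lo n \<le> u n \<and> u n \<le> hi n" if "n \<ge> 1" for n
    using that unfolding u_def by auto
  have s: "lc_sums (\<lambda>n. hi n - lo n) s" using assms unfolding closed_cover_def by blast
  have "\<exists>s1. lc_sums (\<lambda>n. u n - lo n) s1"
    by (rule lc_sums_comparison[OF _ s]) (use between in \<open>auto simp: diff_right_mono\<close>)
  then obtain s1 where s1: "lc_sums (\<lambda>n. u n - lo n) s1" by blast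
  have "lc_sums (\<lambda>n. (hi n - lo n) - (u n - lo n)) (s - s1)"
    using s s1 by (rule lc_sums_diff)
  then have s2: "lc_sums (\<lambda>n. hi n - u n) (s - s1)" by simp
  have "x \<le> u n" if "x \<le> c" "x \<le> hi n" for x n
    using that unfolding u_def by (simp add: le_max_iff_disj)
  moreover have "u n \<le> x" if "c \<le> x" "lo n \<le> x" for x n
    using that unfolding u_def by (simp add: min_le_iff_disj)
  ultimately have "closed_cover {x\<in>X. x \<le> c} lo u s1" "closed_cover {x\<in>X. c \<le> x} u hi (s - s1)"
    using assms between s1 s2 unfolding closed_cover_def by fastforce+
  then show ?thesis using that by fastforce
qed

lemma closed_cover_split:
  assumes "closed_cover X lo hi s" "{c<..<d} \<subseteq> I" "I \<subseteq> {c..d}"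
  obtains lo1 hi1 s1 lo2 hi2 s2
  where "closed_cover (X - I) lo1 hi1 s1" "closed_cover (X \<inter> I) lo2 hi2 s2" "s1 + s2 = s"
proof -
  obtain u s1 s2 where left: "closed_cover {x\<in>X. x \<le> c} lo u s1"
    and right: "closed_cover {x\<in>X. c \<le> x} u hi s2" and "s1 + s2 = s"
    using closed_cover_cut[OF assms(1)] by blast
  obtain v t1 t2 where mid: "closed_cover {x\<in>{x\<in>X. c \<le> x}. x \<le> d} u v t1"
    and far: "closed_cover {x\<in>{x\<in>X. c \<le> x}. d \<le> x} v hi t2" and "t1 + t2 = s2"
    using closed_cover_cut[OF right] by blast
  have "X - I \<subseteq> {x\<in>X. x \<le> c} \<union> {x\<in>{x\<in>X. c \<le> x}. d \<le> x}"
    using assms(2) by (auto simp: not_le[symmetric])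
  then have "closed_cover (X - I) (interleave lo v) (interleave u hi) (s1 + t2)"
    using closed_cover_Un[OF left far] by (rule closed_cover_subset[rotated])
  moreover have "closed_cover (X \<inter> I) u v t1"
    using mid by (rule closed_cover_subset) (use assms(3) in auto)
  moreover have "(s1 + t2) + t1 = s"
    using \<open>s1 + s2 = s\<close> \<open>t1 + t2 = s2\<close> by (simp add: algebra_simps)
  ultimately show ?thesis using that by blast
qed

lemma outer_measurable_Diff_interval:
  assumes "outer_measurable X" "lc_interval I"
  shows "outer_measurable (X - I)"
  unfolding outer_measurable_def
proof (rule lc_is_inf_exists)
  fix e :: lc
  assume "0 < e"
  then have h: "0 < lc_half e" by (rule lc_half_pos)
  have m: "lc_is_inf (cover_sums X) (M_u X)" using assms(1) by (rule outer_measurable_M_u)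
  obtain c d where cd: "{c<..<d} \<subseteq> I" "I \<subseteq> {c..d}"
    using lc_interval_bounds[OF assms(2)] by metis
  obtain s where s: "s \<in> cover_sums X" "s < M_u X + lc_half e"
    using lc_is_inf_approx[OF m h] by blast
  obtain lo hi where "closed_cover X lo hi s"
    using s(1) closed_cover_if_cover_sums by blast
  then obtain lo1 hi1 s1 lo2 hi2 s2 where p1: "closed_cover (X - I) lo1 hi1 s1"
    and p2: "closed_cover (X \<inter> I) lo2 hi2 s2" and "s1 + s2 = s"
    using closed_cover_split[OF _ cd] by blast
  obtain s' where s': "s' \<in> cover_sums (X - I)" "s' \<le> s1 + lc_half e"
    using closed_cover_approx[OF p1 h] by blast
  have "M_u X \<le> y + s2" if "y \<in> cover_sums (X - I)" for y
    using lc_is_inf_le_add_closed_cover[OF m _ that p2] by blast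
  then have lower: "\<forall>y\<in>cover_sums (X - I). M_u X - s2 \<le> y"
    by (simp add: algebra_simps)
  have "s' - (M_u X - s2) \<le> (s1 + s2 - M_u X) + lc_half e"
    using s'(2) by (simp add: algebra_simps)
  also have "\<dots> < lc_half e + lc_half e"
    using s(2) \<open>s1 + s2 = s\<close> by (simp add: algebra_simps)
  finally have "s' - (M_u X - s2) \<le> e" by (simp add: lc_half_double)
  with lower s'(1) show "\<exists>l s. (\<forall>y\<in>cover_sums (X - I). l \<le> y) \<and> s \<in> cover_sums (X - I) \<and> s - l \<le> e"
    by blast
qed

lemma outer_measure_lim_of_tail_covers:
  assumes meas: "\<And>k. outer_measurable (X k)"
    and sub: "\<And>k. B \<subseteq> X k"
    and tail: "\<And>k. closed_cover (X k - B) (lo k) (hi k) (t k)"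
    and t0: "lc_lim t 0"
  shows "outer_measurable B" "lc_lim (\<lambda>k. M_u (X k)) (M_u B)"
proof -
  have inf: "lc_is_inf (cover_sums (X k)) (M_u (X k))" for k
    using meas by (rule outer_measurable_M_u)
  have "M_u (X k) \<le> s + t k" if "s \<in> cover_sums B" for s k
    by (rule lc_is_inf_le_add_closed_cover[OF inf _ that tail]) blast
  then have lower: "\<forall>s\<in>cover_sums B. M_u (X k) - t k \<le> s" for k
    by (simp add: algebra_simps)
  have covers: "cover_sums (X k) \<subseteq> cover_sums B" for k
    using sub by (rule cover_sums_antimono)
  have "\<exists>m. lc_is_inf (cover_sums B) m"
  proof (rule lc_is_inf_exists)
    fix e :: lc
    assume "0 < e"
    then have h: "0 < lc_half e" by (rule lc_half_pos)
    then obtain N where "\<forall>n\<ge>N. 0 - lc_half e < t n \<and> t n < 0 + lc_half e"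
      using t0 unfolding lc_lim_def by blast
    then have tN: "t N < lc_half e" by simp
    obtain s where s: "s \<in> cover_sums (X N)" "s < M_u (X N) + lc_half e"
      using lc_is_inf_approx[OF inf h] by blast
    have "s - (M_u (X N) - t N) = (s - M_u (X N)) + t N" by (simp add: algebra_simps)
    also have "\<dots> < e"
      using s(2) tN by (intro lc_half_add_less) (simp_all add: algebra_simps)
    finally show "\<exists>l s. (\<forall>y\<in>cover_sums B. l \<le> y) \<and> s \<in> cover_sums B \<and> s - l \<le> e"
      using lower s(1) covers by (meson less_imp_le subsetD)
  qed
  then obtain m where m: "lc_is_inf (cover_sums B) m" by blast
  then show "outer_measurable B" unfolding outer_measurable_def by blast
  have "m \<le> M_u (X k) \<and> M_u (X k) \<le> m + t k" for k
  proof
    show "m \<le> M_u (X k)"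
      using m inf covers unfolding lc_is_inf_def by blast
    have "M_u (X k) - t k \<le> m"
      using m lower unfolding lc_is_inf_def by blast
    then show "M_u (X k) \<le> m + t k" by (simp add: diff_le_eq add.commute)
  qed
  then have "lc_lim (\<lambda>k. M_u (X k)) m"
    by (rule lc_lim_squeeze[where M = 0, OF _ t0])
  then show "lc_lim (\<lambda>k. M_u (X k)) (M_u B)"
    using M_u_eq[OF m] by simp
qed

lemma outer_measurable_Diff_intervals:
  fixes I :: "nat \<Rightarrow> lc set"
  assumes "outer_measurable A" "\<forall>n\<ge>1. lc_interval (I n)"
  shows "outer_measurable (A - (\<Union>n\<in>{1..k}. I n))"
proof (induction k)
  case (Suc k)
  have "A - (\<Union>n\<in>{1..Suc k}. I n) = (A - (\<Union>n\<in>{1..k}. I n)) - I (Suc k)"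
    by (auto simp: atLeastAtMostSuc_conv)
  then show ?case using outer_measurable_Diff_interval[OF Suc] assms(2) by simp
qed (simp add: assms(1))

theorem lemma3p1:
  fixes A :: "lc set" and I :: "nat \<Rightarrow> lc set"
  assumes "outer_measurable A"
    and "\<forall>n\<ge>1. lc_interval (I n)"
    and "\<forall>m\<ge>1. \<forall>n\<ge>1. m \<noteq> n \<longrightarrow> I m \<inter> I n = {}"
    and "lc_lim (\<lambda>n. lc_len (I n)) 0"
  shows "outer_measurable (A - (\<Union>n\<in>{1..}. I n))
    \<and> (\<exists>L. lc_lim (\<lambda>k. M_u (A - (\<Union>n\<in>{1..k}. I n))) L)
    \<and> lc_lim (\<lambda>k. M_u (A - (\<Union>n\<in>{1..k}. I n))) (M_u (A - (\<Union>n\<in>{1..}. I n)))"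
proof -
  \<comment> \<open>The intervals need not be disjoint for this argument.\<close>
  define B where "B = A - (\<Union>n\<in>{1..}. I n)"
  define X where "X k = A - (\<Union>n\<in>{1..k}. I n)" for k
  obtain lo hi where I: "\<And>n. n \<ge> 1 \<Longrightarrow> lo n \<le> hi n \<and> lc_len (I n) = hi n - lo n \<and> I n \<subseteq> {lo n..hi n}"
    using lc_interval_family_bounds assms(2) by blast
  obtain T where "lc_sums (\<lambda>n. lc_len (I n)) T"
    using assms(4) lc_summable_iff_lim_zero by blast
  then have T: "lc_sums (\<lambda>n. hi n - lo n) T" by (rule lc_sums_cong) (simp add: I)
  have meas: "outer_measurable (X k)" for k
    unfolding X_def using assms(1,2) by (rule outer_measurable_Diff_intervals)
  have sub: "B \<subseteq> X k" for k by (auto simp: B_def X_def)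
  have "closed_cover (\<Union>n\<in>{Suc k..}. I n) (\<lambda>n. lo (n + k)) (\<lambda>n. hi (n + k))
      (T - psum (\<lambda>n. hi n - lo n) k)" for k
    by (rule closed_cover_tail[OF _ T]) (use I in blast)
  moreover have "X k - B \<subseteq> (\<Union>n\<in>{Suc k..}. I n)" for k
    unfolding B_def X_def by (auto, metis atLeastAtMost_iff atLeast_iff not_less_eq_eq)
  ultimately have tail: "closed_cover (X k - B) (\<lambda>n. lo (n + k)) (\<lambda>n. hi (n + k))
      (T - psum (\<lambda>n. hi n - lo n) k)" for k
    by (rule closed_cover_subset)
  note limit = outer_measure_lim_of_tail_covers[OF meas sub tail lc_sums_tail_lim[OF T]]
  then show ?thesis unfolding B_def X_def by blast
qed

end
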